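(* Let $\mathcal{X}$ be a real Hilbert space, let $\mathbb{A},\mathbb{B},\mathbb{C}:\mathcal{X}\to 2^{\mathcal{X}}$ be maximal monotone operators with $\mathbb{C}$ $\beta$-cocoercive ($\beta>0$), let $\gamma\in(0,2\beta]$, and let $$T=\mathbb{J}_{\gamma\mathbb{C}}\circ\big(\mathbb{J}_{\gamma \mathbb{A}}\circ(2\mathbb{J}_{\gamma \mathbb{B}}-I-\gamma \mathbb{C}\mathbb{J}_{\gamma \mathbb{B}})+\gamma \mathbb{C}\mathbb{J}_{\gamma \mathbb{B}}\big)+ (I-\mathbb{J}_{\gamma \mathbb{B}}).$$ Assume $T$ is $a$-averaged with $a=\frac{2\beta}{4\beta-\gamma}<1$. Let $z^0\in\mathcal{X}$ and let $(z^j)_{j\ge0}$ be generated by: for $k=0,1,\dots$, $x^k_{\mathbb{B}}=\mathbb{J}_{\gamma\mathbb{B}}(z^k)$, $x^k_{\mathbb{A}}=\mathbb{J}_{\gamma\mathbb{A}}(2x^k_{\mathbb{B}}-z^k-\gamma\mathbb{C}x^k_{\mathbb{B}})$, $x^k_{\mathbb{C}}=\mathbb{J}_{\gamma\mathbb{C}}(x^k_{\mathbb{A}}+\gamma\mathbb{C}x^k_{\mathbb{B}})$, $z^{k+1}=z^k+\lambda_k(x^k_{\mathbb{C}}-x^k_{\mathbb{B}})$, with $\lambda_k\in(0,(4\beta-\gamma)/(2\beta))$. Let $z^*$ be a fixed point of $T$ and $x^*=\mathbb{J}_{\gamma\mathbb{B}}(z^* )$. Then $(x^j_{\mathbb{A}})_{j\ge0}$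 and $(x^j_{\mathbb{B}})_{j\ge0}$ are contained in the closed ball $\overline{B}\big(x^*,(1+\gamma/\beta)\|z^0-z^*\|\big)$.
   Context: $\mathbb{J}_M=(I+M)^{-1}$ is the resolvent of $M$. $\mathbb{C}$ is $\beta$-cocoercive if $\langle u-v,x-y\rangle\ge\beta\|u-v\|^2$ for all $u\in\mathbb{C}x,v\in\mathbb{C}y$. A map $T$ is $a$-averaged if $T=(1-a)I+aN$ for some nonexpansive $N$. *)

theory Defs
  imports "HOL-Analysis.Analysis"
begin

definition monotone_op :: "('a::real_inner \<Rightarrow> 'a set) \<Rightarrow> bool" where
  "monotone_op M \<longleftrightarrow> (\<forall>x y u v. u \<in> M x \<longrightarrow> v \<in> M y \<longrightarrow> inner (u - v) (x - y) \<ge> 0)"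

definition maximal_monotone :: "('a::real_inner \<Rightarrow> 'a set) \<Rightarrow> bool" where
  "maximal_monotone M \<longleftrightarrow> monotone_op M \<and>
     (\<forall>x u. (\<forall>y v. v \<in> M y \<longrightarrow> inner (u - v) (x - y) \<ge> 0) \<longrightarrow> u \<in> M x)"

definition cocoercive :: "real \<Rightarrow> ('a::real_inner \<Rightarrow> 'a set) \<Rightarrow> bool" where
  "cocoercive \<beta> M \<longleftrightarrow> (\<forall>x y u v. u \<in> M x \<longrightarrow> v \<in> M y \<longrightarrow>
      inner (u - v) (x - y) \<ge> \<beta> * (norm (u - v))\<^sup>2)"

definition scale_op :: "real \<Rightarrow> ('a::real_vector \<Rightarrow> 'a set) \<Rightarrow> 'a \<Rightarrow> 'a set" where
  "scale_op \<gamma> M = (\<lambda>x. (\<lambda>v. \<gamma> *\<^sub>R v) ` M x)"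

text \<open>Resolvent J_M = (I + M)^{-1}; for maximal monotone M it is single-valued with full
  domain (Minty), so we take the unique y with x \<in> y + M y.\<close>
definition resolvent :: "('a::real_vector \<Rightarrow> 'a set) \<Rightarrow> 'a \<Rightarrow> 'a" where
  "resolvent M x = (THE y. x - y \<in> M y)"

definition nonexpansive :: "('a::real_normed_vector \<Rightarrow> 'a) \<Rightarrow> bool" where
  "nonexpansive N \<longleftrightarrow> (\<forall>x y. norm (N x - N y) \<le> norm (x - y))"

definition averaged :: "real \<Rightarrow> ('a::real_normed_vector \<Rightarrow> 'a) \<Rightarrow> bool" where
  "averaged a T \<longleftrightarrow> (\<exists>N. nonexpansive N \<and> T = (\<lambda>x. (1 - a) *\<^sub>R x + a *\<^sub>R N x))"

end

theory Submission
  imports Defs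
begin

text \<open>The core is Minty's theorem: the resolvent of a maximal monotone operator is defined
  everywhere, hence single-valued and firmly nonexpansive. After a shift one needs a point x with
  \<open>\<langle>v + x, x - a\<rangle> \<le> 0\<close> for every graph point (a, v), and each such gap function is a shifted
  squared distance to the centre (a - v)/2. For finitely many graph points, minimise the largest
  gap over the convex hull of the centres: the minimiser is a convex combination of the centres of
  the active points, and averaging the active gaps with these weights shows, by monotonicity, that
  the minimal value m is nonpositive and that the largest gap at y is at least
  \<open>m + \<parallel>y - x\<parallel>\<^sup>2\<close>. Along the net of finite subsets of the graph the values m therefore
  increase, stay bounded and dominate the squared distances between the minimisers, so the
  minimisers converge, and their limit is the required point.

  The bound then combines three facts. A relaxed step of the averaged map T with \<open>\<lambda>\<^sub>k a \<le> 1\<close>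
  does not increase the distance to its fixed point z*. The point xB is the image of z under the nonexpansive resolvent of
  \<open>\<gamma>B\<close>. The point xA is the image of z under \<open>J_\<gamma>A \<circ> (2 J_\<gamma>B - I - \<gamma> C J_\<gamma>B)\<close>, which is
  \<open>(1 + \<gamma>/\<beta>)\<close>-Lipschitz because the reflected resolvent is nonexpansive and C is
  \<open>1/\<beta>\<close>-Lipschitz; the fixed point equation says that this map sends z* to x*.\<close>

definition minty_gap :: "'a::real_inner \<times> 'a \<Rightarrow> 'a \<Rightarrow> real" where
  "minty_gap p x = inner (snd p + x) (x - fst p)"

definition minty_center :: "'a::real_inner \<times> 'a \<Rightarrow> 'a" where
  "minty_center p = (1/2) *\<^sub>R (fst p - snd p)"

lemma minty_gap_expand:
  "minty_gap p x = (norm x)\<^sup>2 - 2 * inner x (minty_center p) - inner (snd p) (fst p)"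
  unfolding minty_gap_def minty_center_def
  by (simp add: power2_norm_eq_inner inner_diff_left inner_diff_right inner_add_left
      inner_add_right inner_commute algebra_simps)

lemma minty_gap_eq_dist:
  "minty_gap p x = (dist x (minty_center p))\<^sup>2 - (norm (minty_center p))\<^sup>2 - inner (snd p) (fst p)"
  unfolding minty_gap_expand dist_norm
  by (simp add: power2_norm_eq_inner inner_diff_left inner_diff_right inner_commute)

lemma continuous_on_minty_gap: "continuous_on X (minty_gap p)"
  unfolding minty_gap_def by (intro continuous_intros)

lemma continuous_on_Max_image:
  fixes f :: "'p \<Rightarrow> 'a::topological_space \<Rightarrow> 'b::linorder_topology"
  assumes "finite S" "S \<noteq> {}" "\<And>p. p \<in> S \<Longrightarrow> continuous_on X (f p)"
  shows "continuous_on X (\<lambda>x. Max ((\<lambda>p. f p x) ` S))"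
  using assms
proof (induction S rule: finite_ne_induct)
  case (singleton p)
  then show ?case by simp
next
  case (insert p S)
  have "continuous_on X (\<lambda>x. max (f p x) (Max ((\<lambda>p. f p x) ` S)))"
    using insert by (intro continuous_on_max) auto
  then show ?case using insert by (simp add: Max_insert)
qed

lemma dist_towards_closest_point_less:
  fixes x p c :: "'a::real_inner"
  assumes "convex K" "closed K" "p \<in> K" "c \<in> K" "\<forall>y\<in>K. dist x p \<le> dist x y" "x \<notin> K"
    and t: "0 < t" "t \<le> 1"
  shows "dist (x + t *\<^sub>R (p - x)) c < dist x c"
proof -
  define d where "d = p - x"
  have "d \<noteq> 0" using assms(3,6) unfolding d_def by auto
  have obtuse: "inner (x - p) (c - p) \<le> 0"
    using any_closest_point_dot[OF assms(1-5)] .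
  have expand: "(dist (x + t *\<^sub>R d) c)\<^sup>2 = (dist x c)\<^sup>2 + 2 * t * inner (x - c) d + t\<^sup>2 * (norm d)\<^sup>2"
    unfolding dist_norm power2_norm_eq_inner
    by (simp add: inner_add_left inner_add_right inner_diff_left inner_diff_right inner_commute
        algebra_simps power2_eq_square)
  have "inner (x - c) d = inner (x - p) (c - p) - (norm d)\<^sup>2"
    unfolding d_def by (simp add: power2_norm_eq_inner inner_diff_left inner_diff_right inner_commute)
  then have "2 * t * inner (x - c) d \<le> 2 * t * - (norm d)\<^sup>2"
    using obtuse t by (intro mult_left_mono) auto
  then have "(dist (x + t *\<^sub>R d) c)\<^sup>2 \<le> (dist x c)\<^sup>2 - t * (2 - t) * (norm d)\<^sup>2"
    unfolding expand by (simp add: algebra_simps power2_eq_square)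
  also have "\<dots> < (dist x c)\<^sup>2" using t \<open>d \<noteq> 0\<close> by simp
  finally show ?thesis unfolding d_def by (simp add: power_less_imp_less_base)
qed

lemma minty_gap_towards_closest_point_less:
  fixes x p :: "'a::real_inner"
  assumes "convex K" "closed K" "p \<in> K" "minty_center q \<in> K" "\<forall>y\<in>K. dist x p \<le> dist x y"
    "x \<notin> K" "0 < t" "t \<le> 1"
  shows "minty_gap q (x + t *\<^sub>R (p - x)) < minty_gap q x"
  using dist_towards_closest_point_less[OF assms]
  unfolding minty_gap_eq_dist by (simp add: power_strict_mono)

lemma minimizer_in_hull_of_active:
  fixes S :: "('a::real_inner \<times> 'a) set"
  defines "K \<equiv> convex hull (minty_center ` S)"
    and "\<phi> \<equiv> \<lambda>x. Max ((\<lambda>p. minty_gap p x) ` S)"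
  assumes fin: "finite S" and x0K: "x0 \<in> K" and x0min: "\<forall>y\<in>K. \<phi> x0 \<le> \<phi> y"
  shows "x0 \<in> convex hull (minty_center ` {p \<in> S. minty_gap p x0 = \<phi> x0})"
proof (rule ccontr)
  define I where "I = {p \<in> S. minty_gap p x0 = \<phi> x0}"
  define KI where "KI = convex hull (minty_center ` I)"
  assume "x0 \<notin> convex hull (minty_center ` {p \<in> S. minty_gap p x0 = \<phi> x0})"
  then have x0KI: "x0 \<notin> KI" unfolding KI_def I_def .
  have "S \<noteq> {}" using x0K unfolding K_def by auto
  then have "\<phi> x0 \<in> (\<lambda>p. minty_gap p x0) ` S" unfolding \<phi>_def using fin by (intro Max_in) auto
  then have "I \<noteq> {}" unfolding I_def by force
  then have "compact KI" "KI \<noteq> {}"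
    unfolding KI_def using fin by (auto simp: I_def finite_imp_compact_convex_hull)
  moreover have "continuous_on KI (dist x0)" by (intro continuous_intros)
  ultimately obtain p where pKI: "p \<in> KI" and pclosest: "\<forall>y\<in>KI. dist x0 p \<le> dist x0 y"
    using continuous_attains_inf by blast
  define x where "x t = x0 + t *\<^sub>R (p - x0)" for t
  have "convex KI" "closed KI" using \<open>compact KI\<close> by (auto simp: KI_def compact_imp_closed)
  have active: "minty_gap q (x t) < \<phi> x0" if "q \<in> I" "0 < t" "t \<le> 1" for q t
  proof -
    have "minty_center q \<in> KI" unfolding KI_def using that(1) by (simp add: hull_inc)
    then have "minty_gap q (x t) < minty_gap q x0" unfolding x_def
      by (rule minty_gap_towards_closest_point_less[OF \<open>convex KI\<close> \<open>closed KI\<close> pKI _ pclosest x0KI that(2,3)])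
    then show ?thesis using that(1) unfolding I_def by simp
  qed
  have "\<forall>\<^sub>F t in at_right 0. minty_gap q (x t) < \<phi> x0" if "q \<in> S - I" for q
  proof -
    have "((\<lambda>t. minty_gap q (x t)) \<longlongrightarrow> minty_gap q (x 0)) (at_right 0)"
      unfolding minty_gap_def x_def by (intro tendsto_intros)
    then have "((\<lambda>t. minty_gap q (x t)) \<longlongrightarrow> minty_gap q x0) (at_right 0)"
      by (simp add: x_def)
    moreover have "minty_gap q x0 < \<phi> x0"
      using that fin unfolding I_def \<phi>_def by (auto intro!: order.not_eq_order_implies_strict)
    ultimately show ?thesis by (rule order_tendstoD(2))
  qed
  then have "\<forall>\<^sub>F t in at_right 0. \<forall>q\<in>S - I. minty_gap q (x t) < \<phi> x0"
    using fin by (intro eventually_ball_finite) auto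
  moreover have "\<forall>\<^sub>F t in at_right (0::real). 0 < t \<and> t \<le> 1"
    unfolding eventually_at_right_field by (intro exI[of _ 1]) auto
  ultimately obtain t where t: "0 < t" "t \<le> 1" and inactive: "\<forall>q\<in>S - I. minty_gap q (x t) < \<phi> x0"
    using eventually_happens'[OF trivial_limit_at_right_real] eventually_conj by blast
  have "\<phi> (x t) < \<phi> x0"
    unfolding \<phi>_def using fin \<open>S \<noteq> {}\<close> active[OF _ t] inactive by (auto simp: \<phi>_def)
  moreover have "KI \<subseteq> K" unfolding KI_def K_def I_def by (intro hull_mono image_mono) auto
  then have "x t \<in> K"
    using convexD_alt[of K x0 p t] x0K pKI t unfolding x_def by (auto simp: K_def algebra_simps)
  ultimately show False using x0min by force
qed

lemma convex_hull_image_weights: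
  fixes f :: "'i \<Rightarrow> 'a::real_vector"
  assumes fin: "finite I" and x: "x \<in> convex hull (f ` I)"
  obtains u where "\<forall>i\<in>I. 0 \<le> u i" "sum u I = 1" "(\<Sum>i\<in>I. u i *\<^sub>R f i) = x"
proof -
  obtain w where w0: "\<forall>y\<in>f ` I. 0 \<le> w y" and w1: "sum w (f ` I) = 1"
    and wx: "(\<Sum>y\<in>f ` I. w y *\<^sub>R y) = x"
    using x convex_hull_finite[of "f ` I"] fin by auto
  define fiber where "fiber y = {i \<in> I. f i = y}" for y
  define u where "u i = w (f i) / card (fiber (f i))" for i
  have fiber_sum: "sum u (fiber y) = w y" if "y \<in> f ` I" for y
  proof -
    have "finite (fiber y)" "fiber y \<noteq> {}" using fin that unfolding fiber_def by auto
    moreover have "u i = w y / card (fiber y)" if "i \<in> fiber y" for i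
      using that unfolding u_def fiber_def by simp
    ultimately show ?thesis by simp
  qed
  show thesis
  proof
    show "\<forall>i\<in>I. 0 \<le> u i" using w0 unfolding u_def by simp
    have "sum u I = (\<Sum>y\<in>f ` I. sum u (fiber y))"
      unfolding fiber_def by (rule sum.image_gen[OF fin])
    then show "sum u I = 1" using w1 fiber_sum by simp
    have "(\<Sum>i\<in>I. u i *\<^sub>R f i) = (\<Sum>y\<in>f ` I. \<Sum>i\<in>fiber y. u i *\<^sub>R f i)"
      unfolding fiber_def by (rule sum.image_gen[OF fin])
    also have "\<dots> = (\<Sum>y\<in>f ` I. sum u (fiber y) *\<^sub>R y)"
      by (intro sum.cong refl) (simp add: fiber_def scaleR_sum_left)
    also have "\<dots> = x" using wx fiber_sum by simp
    finally show "(\<Sum>i\<in>I. u i *\<^sub>R f i) = x" .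
  qed
qed

lemma minty_gap_weighted_sum:
  assumes "finite I" "sum u I = 1" "(\<Sum>p\<in>I. u p *\<^sub>R minty_center p) = x0"
  shows "(\<Sum>p\<in>I. u p * minty_gap p y)
           = (norm (y - x0))\<^sup>2 - (norm x0)\<^sup>2 - (\<Sum>p\<in>I. u p * inner (snd p) (fst p))"
proof -
  have "(\<Sum>p\<in>I. u p * minty_gap p y)
      = (\<Sum>p\<in>I. u p) * (norm y)\<^sup>2 - 2 * inner y (\<Sum>p\<in>I. u p *\<^sub>R minty_center p)
        - (\<Sum>p\<in>I. u p * inner (snd p) (fst p))"
    unfolding minty_gap_expand
    by (simp add: inner_sum_right sum_distrib_left sum_distrib_right sum_subtractf sum.distrib
        algebra_simps)
  also have "\<dots> = (norm (y - x0))\<^sup>2 - (norm x0)\<^sup>2 - (\<Sum>p\<in>I. u p * inner (snd p) (fst p))"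
    using assms(2,3) by (simp add: power2_norm_eq_inner inner_diff_left inner_diff_right inner_commute)
  finally show ?thesis .
qed

lemma weighted_inner_le_of_monotone:
  fixes a v :: "'i \<Rightarrow> 'a::real_inner"
  assumes fin: "finite I" and u0: "\<forall>i\<in>I. 0 \<le> u i" and u1: "sum u I = 1"
    and mono: "\<And>i j. i \<in> I \<Longrightarrow> j \<in> I \<Longrightarrow> 0 \<le> inner (v i - v j) (a i - a j)"
  shows "inner (\<Sum>i\<in>I. u i *\<^sub>R v i) (\<Sum>i\<in>I. u i *\<^sub>R a i) \<le> (\<Sum>i\<in>I. u i * inner (v i) (a i))"
proof -
  define P where "P = (\<Sum>i\<in>I. u i * inner (v i) (a i))"
  define Q where "Q = inner (\<Sum>i\<in>I. u i *\<^sub>R v i) (\<Sum>i\<in>I. u i *\<^sub>R a i)"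
  have diag: "(\<Sum>i\<in>I. \<Sum>j\<in>I. u i * u j * inner (v i) (a i)) = P"
    "(\<Sum>i\<in>I. \<Sum>j\<in>I. u i * u j * inner (v j) (a j)) = P"
    using u1 unfolding P_def
    by (simp_all add: sum_distrib_left[symmetric] sum_distrib_right[symmetric] mult.assoc)
  have cross_ji: "(\<Sum>i\<in>I. \<Sum>j\<in>I. u i * u j * inner (v j) (a i)) = Q"
    unfolding Q_def inner_sum_left inner_sum_right by (simp add: sum_distrib_left mult_ac)
  have "(\<Sum>i\<in>I. \<Sum>j\<in>I. u i * u j * inner (v i) (a j))
      = (\<Sum>j\<in>I. \<Sum>i\<in>I. u i * u j * inner (v i) (a j))"
    by (rule sum.swap)
  with cross_ji have cross_ij: "(\<Sum>i\<in>I. \<Sum>j\<in>I. u i * u j * inner (v i) (a j)) = Q"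
    by (simp add: mult.commute)
  have "0 \<le> (\<Sum>i\<in>I. \<Sum>j\<in>I. u i * u j * inner (v i - v j) (a i - a j))"
    using u0 mono by (intro sum_nonneg) simp
  also have "\<dots> = (\<Sum>i\<in>I. \<Sum>j\<in>I. u i * u j * inner (v i) (a i) + u i * u j * inner (v j) (a j)
      - u i * u j * inner (v i) (a j) - u i * u j * inner (v j) (a i))"
    by (intro sum.cong refl) (simp add: inner_diff_left inner_diff_right algebra_simps)
  also have "\<dots> = 2 * P - 2 * Q"
    by (simp only: sum.distrib sum_subtractf diag cross_ij cross_ji)
  finally show ?thesis unfolding P_def Q_def by simp
qed

lemma ex_ge_convex_combination:
  fixes f :: "'i \<Rightarrow> real"
  assumes "finite I" "\<forall>i\<in>I. 0 \<le> u i" "sum u I = 1"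
  shows "\<exists>i\<in>I. (\<Sum>j\<in>I. u j * f j) \<le> f i"
proof -
  have "I \<noteq> {}" using assms(3) by auto
  then have "Max (f ` I) \<in> f ` I" using assms(1) by (intro Max_in) auto
  then obtain i where i: "i \<in> I" "f i = Max (f ` I)" by auto
  have "(\<Sum>j\<in>I. u j * f j) \<le> (\<Sum>j\<in>I. u j * f i)"
    using assms(1,2) i by (intro sum_mono mult_left_mono) auto
  also have "\<dots> = f i" using assms(3) by (simp add: sum_distrib_right[symmetric])
  finally show ?thesis using i(1) by blast
qed

lemma active_minty_gap_bounds:
  fixes I :: "('a::real_inner \<times> 'a) set"
  assumes fin: "finite I" and u0: "\<forall>p\<in>I. 0 \<le> u p" and u1: "sum u I = 1"
    and ux: "(\<Sum>p\<in>I. u p *\<^sub>R minty_center p) = x0"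
    and mono: "\<And>p q. p \<in> I \<Longrightarrow> q \<in> I \<Longrightarrow> 0 \<le> inner (snd p - snd q) (fst p - fst q)"
    and active: "\<forall>p\<in>I. minty_gap p x0 = m"
  shows "m \<le> 0" and "\<exists>p\<in>I. m + (norm (y - x0))\<^sup>2 \<le> minty_gap p y"
proof -
  define a where "a = (\<Sum>p\<in>I. u p *\<^sub>R fst p)"
  define v where "v = (\<Sum>p\<in>I. u p *\<^sub>R snd p)"
  define P where "P = (\<Sum>p\<in>I. u p * inner (snd p) (fst p))"
  have mean: "(\<Sum>p\<in>I. u p * minty_gap p y) = (norm (y - x0))\<^sup>2 - (norm x0)\<^sup>2 - P" for y
    unfolding P_def using minty_gap_weighted_sum[OF fin u1 ux] .
  have "(\<Sum>p\<in>I. u p * minty_gap p x0) = m"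
    using u1 active by (simp add: sum_distrib_right[symmetric])
  then have m_eq: "m = - (norm x0)\<^sup>2 - P" using mean[of x0] by simp
  have "x0 = (1/2) *\<^sub>R (a - v)"
    unfolding ux[symmetric] a_def v_def minty_center_def
    by (simp add: scaleR_sum_right sum_subtractf scaleR_diff_right mult.commute)
  then have "m = - (1/4) * (norm (a - v))\<^sup>2 - P"
    unfolding m_eq by (simp add: power_mult_distrib power2_eq_square)
  also have "\<dots> \<le> - (1/4) * (norm (a - v))\<^sup>2 - inner v a"
    using weighted_inner_le_of_monotone[OF fin u0 u1, of snd fst] mono
    unfolding v_def a_def P_def by auto
  also have "\<dots> = - (1/4) * (norm (a + v))\<^sup>2"
    by (simp add: power2_norm_eq_inner inner_add_left inner_add_right inner_diff_left
        inner_diff_right inner_commute algebra_simps)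
  also have "\<dots> \<le> 0" by simp
  finally show "m \<le> 0" .
  have "m + (norm (y - x0))\<^sup>2 = (\<Sum>p\<in>I. u p * minty_gap p y)" using mean m_eq by simp
  then show "\<exists>p\<in>I. m + (norm (y - x0))\<^sup>2 \<le> minty_gap p y"
    using ex_ge_convex_combination[OF fin u0 u1] by simp
qed

lemma finite_minty:
  fixes S :: "('a::real_inner \<times> 'a) set"
  assumes fin: "finite S" and ne: "S \<noteq> {}"
    and mono: "\<And>p q. p \<in> S \<Longrightarrow> q \<in> S \<Longrightarrow> 0 \<le> inner (snd p - snd q) (fst p - fst q)"
  obtains x0 m where "m \<le> 0" "\<forall>p\<in>S. minty_gap p x0 \<le> m"
    "\<And>y. \<exists>p\<in>S. m + (norm (y - x0))\<^sup>2 \<le> minty_gap p y"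
proof -
  define K where "K = convex hull (minty_center ` S)"
  define \<phi> where "\<phi> x = Max ((\<lambda>p. minty_gap p x) ` S)" for x
  have "compact K" "K \<noteq> {}" unfolding K_def using fin ne by (auto simp: finite_imp_compact_convex_hull)
  moreover have "continuous_on K \<phi>"
    unfolding \<phi>_def using fin ne by (intro continuous_on_Max_image continuous_on_minty_gap)
  ultimately obtain x0 where x0K: "x0 \<in> K" and x0min: "\<forall>y\<in>K. \<phi> x0 \<le> \<phi> y"
    using continuous_attains_inf by blast
  define I where "I = {p \<in> S. minty_gap p x0 = \<phi> x0}"
  have finI: "finite I" "I \<subseteq> S" using fin unfolding I_def by auto
  have "x0 \<in> convex hull (minty_center ` I)"
    using minimizer_in_hull_of_active[OF fin, of x0] x0K x0min unfolding K_def \<phi>_def I_def by blast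
  with finI(1) obtain u where u: "\<forall>p\<in>I. 0 \<le> u p" "sum u I = 1" "(\<Sum>p\<in>I. u p *\<^sub>R minty_center p) = x0"
    by (rule convex_hull_image_weights)
  have monoI: "0 \<le> inner (snd p - snd q) (fst p - fst q)" if "p \<in> I" "q \<in> I" for p q
    using mono that finI(2) by blast
  have active: "\<forall>p\<in>I. minty_gap p x0 = \<phi> x0" unfolding I_def by simp
  show thesis
  proof
    show "\<phi> x0 \<le> 0" by (rule active_minty_gap_bounds(1)[OF finI(1) u monoI active])
    show "\<forall>p\<in>S. minty_gap p x0 \<le> \<phi> x0" unfolding \<phi>_def using fin by auto
    show "\<exists>p\<in>S. \<phi> x0 + (norm (y - x0))\<^sup>2 \<le> minty_gap p y" for y
      using active_minty_gap_bounds(2)[OF finI(1) u monoI active] finI(2) by blast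
  qed
qed

lemma convergent_finite_subsets_of_quadratic_growth:
  fixes X :: "'b set \<Rightarrow> 'a::complete_space" and m :: "'b set \<Rightarrow> real"
  assumes "g0 \<in> G"
    and bounded: "\<And>F. finite F \<Longrightarrow> F \<noteq> {} \<Longrightarrow> F \<subseteq> G \<Longrightarrow> m F \<le> c"
    and growth: "\<And>F F'. F \<noteq> {} \<Longrightarrow> F \<subseteq> F' \<Longrightarrow> finite F' \<Longrightarrow> F' \<subseteq> G \<Longrightarrow>
                   m F + (dist (X F) (X F'))\<^sup>2 \<le> m F'"
  shows "\<exists>x. (X \<longlongrightarrow> x) (finite_subsets_at_top G)"
proof -
  define FF where "FF = {F. finite F \<and> F \<noteq> {} \<and> F \<subseteq> G}"
  define s where "s = Sup (m ` FF)"
  have "{g0} \<in> FF" unfolding FF_def using \<open>g0 \<in> G\<close> by simp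
  have bdd: "bdd_above (m ` FF)" using bounded unfolding FF_def by (intro bdd_aboveI[of _ c]) auto
  have cauchy: "cauchy_filter (filtermap X (finite_subsets_at_top G))"
    unfolding cauchy_filter_metric_filtermap
  proof (intro allI impI)
    fix e :: real assume "0 < e"
    then have "s - (e/2)\<^sup>2 < s" by simp
    then obtain F0 where F0: "F0 \<in> FF" "s - (e/2)\<^sup>2 < m F0"
      using less_cSupD[of "m ` FF"] \<open>{g0} \<in> FF\<close> unfolding s_def by blast
    have near: "dist (X F0) (X F) < e/2" if "F0 \<subseteq> F" "finite F" "F \<subseteq> G" for F
    proof -
      have "F \<in> FF" using that F0(1) unfolding FF_def by auto
      then have "m F \<le> s" unfolding s_def using bdd by (intro cSup_upper) auto
      moreover have "m F0 + (dist (X F0) (X F))\<^sup>2 \<le> m F"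
        using growth that F0(1) unfolding FF_def by blast
      ultimately have "(dist (X F0) (X F))\<^sup>2 < (e/2)\<^sup>2" using F0(2) by linarith
      then show ?thesis by (rule power_less_imp_less_base) (use \<open>0 < e\<close> in simp)
    qed
    show "\<exists>P. eventually P (finite_subsets_at_top G) \<and> (\<forall>F F'. P F \<and> P F' \<longrightarrow> dist (X F) (X F') < e)"
    proof (intro exI conjI allI impI)
      show "eventually (\<lambda>F. F0 \<subseteq> F \<and> finite F \<and> F \<subseteq> G) (finite_subsets_at_top G)"
        unfolding eventually_finite_subsets_at_top using F0(1) unfolding FF_def by blast
      fix F F' assume "(F0 \<subseteq> F \<and> finite F \<and> F \<subseteq> G) \<and> F0 \<subseteq> F' \<and> finite F' \<and> F' \<subseteq> G"
      then show "dist (X F) (X F') < e" by (intro dist_triangle_half_r[OF near near]) auto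
    qed
  qed
  moreover have "filtermap X (finite_subsets_at_top G) \<noteq> bot" by (simp add: filtermap_bot_iff)
  ultimately have "\<exists>x. filtermap X (finite_subsets_at_top G) \<le> nhds x"
    using cauchy_filter_complete_converges[OF _ complete_UNIV] by simp
  then show ?thesis unfolding filterlim_def by blast
qed

lemma maximal_monotone_graph_nonempty:
  assumes "maximal_monotone M"
  obtains a v where "v \<in> M a"
proof -
  have "\<exists>a v. v \<in> M a"
  proof (rule ccontr)
    assume none: "\<nexists>a v. v \<in> M a"
    then have "0 \<in> M 0" using assms unfolding maximal_monotone_def by blast
    with none show False by blast
  qed
  then show thesis using that by blast
qed

lemma finite_minty_choice:
  fixes G :: "('a::real_inner \<times> 'a) set"
  assumes mono: "\<And>p q. p \<in> G \<Longrightarrow> q \<in> G \<Longrightarrow> 0 \<le> inner (snd p - snd q) (fst p - fst q)"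
  obtains X m where "\<And>F. finite F \<Longrightarrow> F \<noteq> {} \<Longrightarrow> F \<subseteq> G \<Longrightarrow> m F \<le> 0"
    "\<And>F p. finite F \<Longrightarrow> F \<noteq> {} \<Longrightarrow> F \<subseteq> G \<Longrightarrow> p \<in> F \<Longrightarrow> minty_gap p (X F) \<le> m F"
    "\<And>F y. finite F \<Longrightarrow> F \<noteq> {} \<Longrightarrow> F \<subseteq> G \<Longrightarrow> \<exists>p\<in>F. m F + (norm (y - X F))\<^sup>2 \<le> minty_gap p y"
proof -
  have "\<exists>xm. finite F \<and> F \<noteq> {} \<and> F \<subseteq> G \<longrightarrow> snd xm \<le> 0 \<and>
      (\<forall>p\<in>F. minty_gap p (fst xm) \<le> snd xm) \<and>
      (\<forall>y. \<exists>p\<in>F. snd xm + (norm (y - fst xm))\<^sup>2 \<le> minty_gap p y)" for F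
  proof (cases "finite F \<and> F \<noteq> {} \<and> F \<subseteq> G")
    case True
    then have F: "finite F" "F \<noteq> {}" and monoF: "\<And>p q. p \<in> F \<Longrightarrow> q \<in> F \<Longrightarrow>
        0 \<le> inner (snd p - snd q) (fst p - fst q)"
      using mono by blast+
    show ?thesis
    proof (rule finite_minty[OF F monoF])
      fix x0 m assume "m \<le> 0" "\<forall>p\<in>F. minty_gap p x0 \<le> m"
        "\<And>y. \<exists>p\<in>F. m + (norm (y - x0))\<^sup>2 \<le> minty_gap p y"
      then show ?thesis by (intro exI[of _ "(x0, m)"]) simp
    qed
  qed blast
  then have "\<forall>F. \<exists>xm. finite F \<and> F \<noteq> {} \<and> F \<subseteq> G \<longrightarrow> snd xm \<le> 0 \<and>
      (\<forall>p\<in>F. minty_gap p (fst xm) \<le> snd xm) \<and>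
      (\<forall>y. \<exists>p\<in>F. snd xm + (norm (y - fst xm))\<^sup>2 \<le> minty_gap p y)" by blast
  then obtain Xm where Xm: "\<forall>F. finite F \<and> F \<noteq> {} \<and> F \<subseteq> G \<longrightarrow> snd (Xm F) \<le> 0 \<and>
      (\<forall>p\<in>F. minty_gap p (fst (Xm F)) \<le> snd (Xm F)) \<and>
      (\<forall>y. \<exists>p\<in>F. snd (Xm F) + (norm (y - fst (Xm F)))\<^sup>2 \<le> minty_gap p y)"
    by (rule choice[THEN exE])
  show thesis by (rule that[of "\<lambda>F. snd (Xm F)" "\<lambda>F. fst (Xm F)"]) (use Xm in blast)+
qed

lemma monotone_set_minty_point:
  fixes G :: "('a::{real_inner,complete_space} \<times> 'a) set"
  assumes "g0 \<in> G"
    and mono: "\<And>p q. p \<in> G \<Longrightarrow> q \<in> G \<Longrightarrow> 0 \<le> inner (snd p - snd q) (fst p - fst q)"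
  obtains x where "\<And>g. g \<in> G \<Longrightarrow> minty_gap g x \<le> 0"
proof (rule finite_minty_choice[of G])
  show "\<And>p q. p \<in> G \<Longrightarrow> q \<in> G \<Longrightarrow> 0 \<le> inner (snd p - snd q) (fst p - fst q)" by (rule mono)
  fix X m assume m0: "\<And>F. finite F \<Longrightarrow> F \<noteq> {} \<Longrightarrow> F \<subseteq> G \<Longrightarrow> m F \<le> 0"
    and le_m: "\<And>F p. finite F \<Longrightarrow> F \<noteq> {} \<Longrightarrow> F \<subseteq> G \<Longrightarrow> p \<in> F \<Longrightarrow> minty_gap p (X F) \<le> m F"
    and growth: "\<And>F y. finite F \<Longrightarrow> F \<noteq> {} \<Longrightarrow> F \<subseteq> G \<Longrightarrow>
      \<exists>p\<in>F. m F + (norm (y - X F))\<^sup>2 \<le> minty_gap p y"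
  have "\<exists>x. (X \<longlongrightarrow> x) (finite_subsets_at_top G)"
  proof (rule convergent_finite_subsets_of_quadratic_growth[OF \<open>g0 \<in> G\<close> m0])
    show "m F + (dist (X F) (X F'))\<^sup>2 \<le> m F'"
      if "F \<noteq> {}" "F \<subseteq> F'" "finite F'" "F' \<subseteq> G" for F F'
    proof -
      have "finite F" "F \<subseteq> G" using that finite_subset by auto
      then obtain p where "p \<in> F" "m F + (norm (X F' - X F))\<^sup>2 \<le> minty_gap p (X F')"
        using growth \<open>F \<noteq> {}\<close> by blast
      moreover have "minty_gap p (X F') \<le> m F'" using le_m that \<open>p \<in> F\<close> by blast
      ultimately show ?thesis by (simp add: dist_norm norm_minus_commute)
    qed
  qed
  then obtain x where x: "(X \<longlongrightarrow> x) (finite_subsets_at_top G)" by blast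
  have "minty_gap g x \<le> 0" if "g \<in> G" for g
  proof (rule tendsto_upperbound)
    show "((\<lambda>F. minty_gap g (X F)) \<longlongrightarrow> minty_gap g x) (finite_subsets_at_top G)"
      unfolding minty_gap_def using x by (intro tendsto_intros)
    have "minty_gap g (X F) \<le> 0" if "finite F" "{g} \<subseteq> F" "F \<subseteq> G" for F
      using le_m[of F g] m0[of F] that by fastforce
    then show "\<forall>\<^sub>F F in finite_subsets_at_top G. minty_gap g (X F) \<le> 0"
      unfolding eventually_finite_subsets_at_top using \<open>g \<in> G\<close> by blast
  qed simp
  then show thesis by (rule that)
qed

lemma minty_surjectivity:
  fixes M :: "'a::{real_inner,complete_space} \<Rightarrow> 'a set"
  assumes mm: "maximal_monotone M"
  shows "\<exists>x. w - x \<in> M x"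
proof -
  define G where "G = {(a, v - w) | a v. v \<in> M a}"
  have "monotone_op M" using mm unfolding maximal_monotone_def by blast
  then have mono: "0 \<le> inner (snd p - snd q) (fst p - fst q)" if "p \<in> G" "q \<in> G" for p q
    using that unfolding G_def monotone_op_def by fastforce
  obtain a0 v0 where "v0 \<in> M a0" using maximal_monotone_graph_nonempty[OF mm] .
  then have "(a0, v0 - w) \<in> G" unfolding G_def by blast
  then obtain x where gap: "\<And>g. g \<in> G \<Longrightarrow> minty_gap g x \<le> 0"
    using monotone_set_minty_point mono by blast
  have "0 \<le> inner ((w - x) - v) (x - y)" if "v \<in> M y" for y v
  proof -
    have "minty_gap (y, v - w) x \<le> 0" using gap that unfolding G_def by blast
    moreover have "inner ((w - x) - v) (x - y) = - minty_gap (y, v - w) x"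
      unfolding minty_gap_def by (simp add: inner_diff_left inner_add_left algebra_simps)
    ultimately show ?thesis by simp
  qed
  then show ?thesis using mm unfolding maximal_monotone_def by blast
qed

lemma maximal_monotone_scale_op:
  fixes M :: "'a::real_inner \<Rightarrow> 'a set"
  assumes mm: "maximal_monotone M" and "0 < \<gamma>"
  shows "maximal_monotone (scale_op \<gamma> M)"
  unfolding maximal_monotone_def
proof (intro conjI allI impI)
  have mon: "monotone_op M" using mm by (simp add: maximal_monotone_def)
  show "monotone_op (scale_op \<gamma> M)"
    unfolding monotone_op_def scale_op_def
  proof (intro allI impI)
    fix x y u v assume "u \<in> (*\<^sub>R) \<gamma> ` M x" "v \<in> (*\<^sub>R) \<gamma> ` M y"
    then obtain u' v' where uv: "u' \<in> M x" "v' \<in> M y" "u = \<gamma> *\<^sub>R u'" "v = \<gamma> *\<^sub>R v'" by auto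
    have "0 \<le> inner (u' - v') (x - y)" using mon uv unfolding monotone_op_def by blast
    then show "0 \<le> inner (u - v) (x - y)"
      using uv \<open>0 < \<gamma>\<close> by (simp add: inner_diff_left)
  qed
next
  fix x u assume H: "\<forall>y v. v \<in> scale_op \<gamma> M y \<longrightarrow> 0 \<le> inner (u - v) (x - y)"
  have "0 \<le> inner ((1/\<gamma>) *\<^sub>R u - v) (x - y)" if "v \<in> M y" for y v
  proof -
    have "0 \<le> inner (u - \<gamma> *\<^sub>R v) (x - y)" using H that by (auto simp: scale_op_def)
    also have "u - \<gamma> *\<^sub>R v = \<gamma> *\<^sub>R ((1/\<gamma>) *\<^sub>R u - v)" using \<open>0 < \<gamma>\<close> by (simp add: algebra_simps)
    finally show ?thesis using \<open>0 < \<gamma>\<close> by (simp add: zero_le_mult_iff)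
  qed
  then have "(1/\<gamma>) *\<^sub>R u \<in> M x" using mm unfolding maximal_monotone_def by blast
  then show "u \<in> scale_op \<gamma> M x"
    unfolding scale_op_def using \<open>0 < \<gamma>\<close> by (intro image_eqI[where x="(1/\<gamma>) *\<^sub>R u"]) auto
qed

lemma monotone_op_resolvent_unique:
  fixes M :: "'a::real_inner \<Rightarrow> 'a set"
  assumes "monotone_op M" "w - y1 \<in> M y1" "w - y2 \<in> M y2"
  shows "y1 = y2"
proof -
  have "0 \<le> inner ((w - y1) - (w - y2)) (y1 - y2)" using assms unfolding monotone_op_def by blast
  also have "inner ((w - y1) - (w - y2)) (y1 - y2) = - (norm (y1 - y2))\<^sup>2"
    by (simp add: power2_norm_eq_inner inner_diff_left inner_diff_right inner_commute)
  finally show ?thesis by simp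
qed

lemma resolvent_in_op:
  fixes M :: "'a::{real_inner,complete_space} \<Rightarrow> 'a set"
  assumes "maximal_monotone M"
  shows "w - resolvent M w \<in> M (resolvent M w)"
proof -
  obtain x where x: "w - x \<in> M x" using minty_surjectivity[OF assms] by blast
  have "monotone_op M" using assms by (simp add: maximal_monotone_def)
  then have "resolvent M w = x"
    unfolding resolvent_def using x monotone_op_resolvent_unique by blast
  then show ?thesis using x by simp
qed

lemma resolvent_firmly_nonexpansive:
  fixes M :: "'a::{real_inner,complete_space} \<Rightarrow> 'a set"
  assumes "maximal_monotone M"
  shows "(norm (resolvent M w1 - resolvent M w2))\<^sup>2 \<le> inner (resolvent M w1 - resolvent M w2) (w1 - w2)"
proof -
  define p where "p = resolvent M w1"
  define q where "q = resolvent M w2"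
  have "0 \<le> inner ((w1 - p) - (w2 - q)) (p - q)"
    using resolvent_in_op[OF assms, of w1] resolvent_in_op[OF assms, of w2] assms
    unfolding maximal_monotone_def monotone_op_def p_def q_def by blast
  also have "inner ((w1 - p) - (w2 - q)) (p - q) = inner (p - q) (w1 - w2) - (norm (p - q))\<^sup>2"
    by (simp add: power2_norm_eq_inner inner_diff_left inner_diff_right inner_commute)
  finally show ?thesis unfolding p_def q_def by simp
qed

lemma resolvent_nonexpansive:
  fixes M :: "'a::{real_inner,complete_space} \<Rightarrow> 'a set"
  assumes "maximal_monotone M"
  shows "norm (resolvent M w1 - resolvent M w2) \<le> norm (w1 - w2)"
proof -
  define d where "d = resolvent M w1 - resolvent M w2"
  have "(norm d)\<^sup>2 \<le> inner d (w1 - w2)" using resolvent_firmly_nonexpansive[OF assms] d_def by simp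
  also have "\<dots> \<le> norm d * norm (w1 - w2)" by (rule real_inner_class.Cauchy_Schwarz_ineq2[THEN order_trans[OF abs_ge_self]])
  finally have "norm d * norm d \<le> norm d * norm (w1 - w2)" by (simp add: power2_eq_square)
  then show ?thesis unfolding d_def[symmetric]
    by (cases "norm d = 0") (auto simp: mult_le_cancel_left)
qed

lemma reflected_resolvent_nonexpansive:
  fixes M :: "'a::{real_inner,complete_space} \<Rightarrow> 'a set"
  assumes "maximal_monotone M"
  shows "norm (2 *\<^sub>R (resolvent M w1 - resolvent M w2) - (w1 - w2)) \<le> norm (w1 - w2)"
proof -
  define d where "d = resolvent M w1 - resolvent M w2"
  have "(norm d)\<^sup>2 \<le> inner d (w1 - w2)" using resolvent_firmly_nonexpansive[OF assms] d_def by simp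
  then have "(norm (2 *\<^sub>R d - (w1 - w2)))\<^sup>2 \<le> (norm (w1 - w2))\<^sup>2"
    by (simp add: power2_norm_eq_inner inner_diff_left inner_diff_right inner_commute)
  then show ?thesis unfolding d_def[symmetric] using power2_le_imp_le by fastforce
qed

lemma cocoercive_imp_lipschitz:
  assumes "cocoercive \<beta> (\<lambda>x. {C x})"
  shows "\<beta> * norm (C x - C y) \<le> norm (x - y)"
proof -
  have "\<beta> * (norm (C x - C y))\<^sup>2 \<le> inner (C x - C y) (x - y)"
    using assms unfolding cocoercive_def by blast
  also have "\<dots> \<le> norm (C x - C y) * norm (x - y)"
    by (rule Cauchy_Schwarz_ineq2[THEN order_trans[OF abs_ge_self]])
  finally have "norm (C x - C y) * (\<beta> * norm (C x - C y)) \<le> norm (C x - C y) * norm (x - y)"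
    by (simp add: power2_eq_square algebra_simps)
  then show ?thesis by (cases "norm (C x - C y) = 0") (auto simp: mult_le_cancel_left)
qed

lemma norm_relaxed_averaged_step_le:
  fixes T :: "'a::real_normed_vector \<Rightarrow> 'a"
  assumes "averaged a T" "0 < a" "T zs = zs" "0 \<le> \<mu>" "\<mu> \<le> 1 / a"
  shows "norm (z + \<mu> *\<^sub>R (T z - z) - zs) \<le> norm (z - zs)"
proof -
  obtain N where N: "nonexpansive N" and T: "T = (\<lambda>x. (1 - a) *\<^sub>R x + a *\<^sub>R N x)"
    using assms(1) unfolding averaged_def by blast
  have "a *\<^sub>R (N zs - zs) = 0" using assms(3) unfolding T by (simp add: algebra_simps)
  then have Nzs: "N zs = zs" using \<open>0 < a\<close> by simp
  define t where "t = \<mu> * a"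
  have t: "0 \<le> t" "t \<le> 1" unfolding t_def using assms(2,4,5) by (auto simp: pos_le_divide_eq)
  have "z + \<mu> *\<^sub>R (T z - z) - zs = (1 - t) *\<^sub>R (z - zs) + t *\<^sub>R (N z - N zs)"
    unfolding T t_def Nzs by (simp add: algebra_simps)
  then have "norm (z + \<mu> *\<^sub>R (T z - z) - zs) \<le> norm ((1 - t) *\<^sub>R (z - zs)) + norm (t *\<^sub>R (N z - N zs))"
    by (simp only: norm_triangle_ineq)
  also have "\<dots> = (1 - t) * norm (z - zs) + t * norm (N z - N zs)" using t by simp
  also have "\<dots> \<le> (1 - t) * norm (z - zs) + t * norm (z - zs)"
    using N t unfolding nonexpansive_def by (intro add_left_mono mult_left_mono) auto
  finally show ?thesis by (simp add: algebra_simps)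
qed

lemma relaxed_averaged_iteration_bounded:
  fixes T :: "'a::real_normed_vector \<Rightarrow> 'a"
  assumes "averaged a T" "0 < a" "T zs = zs"
    and "\<And>k. z (Suc k) = z k + \<mu> k *\<^sub>R (T (z k) - z k)" "\<And>k. 0 \<le> \<mu> k \<and> \<mu> k \<le> 1 / a"
  shows "norm (z k - zs) \<le> norm (z 0 - zs)"
proof (induction k)
  case (Suc k)
  have "norm (z (Suc k) - zs) \<le> norm (z k - zs)"
    unfolding assms(4) by (rule norm_relaxed_averaged_step_le[OF assms(1-3)]) (use assms(5) in auto)
  then show ?case using Suc.IH by simp
qed simp

definition davis_yin_xA :: "real \<Rightarrow> ('a::real_vector \<Rightarrow> 'a set) \<Rightarrow> ('a \<Rightarrow> 'a set) \<Rightarrow> ('a \<Rightarrow> 'a) \<Rightarrow> 'a \<Rightarrow> 'a"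
  where "davis_yin_xA \<gamma> A B C z = resolvent (scale_op \<gamma> A)
    (2 *\<^sub>R resolvent (scale_op \<gamma> B) z - z - \<gamma> *\<^sub>R C (resolvent (scale_op \<gamma> B) z))"

lemma davis_yin_xA_fixed_point:
  fixes C :: "'a::{real_inner,complete_space} \<Rightarrow> 'a"
  assumes "maximal_monotone (\<lambda>x. {C x})" "0 < \<gamma>"
    and fixed: "resolvent (scale_op \<gamma> (\<lambda>x. {C x})) (davis_yin_xA \<gamma> A B C z + \<gamma> *\<^sub>R C (resolvent (scale_op \<gamma> B) z))
      + (z - resolvent (scale_op \<gamma> B) z) = z"
  shows "davis_yin_xA \<gamma> A B C z = resolvent (scale_op \<gamma> B) z"
proof -
  define x where "x = resolvent (scale_op \<gamma> B) z"
  define u where "u = davis_yin_xA \<gamma> A B C z + \<gamma> *\<^sub>R C x"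
  have "resolvent (scale_op \<gamma> (\<lambda>x. {C x})) u = x"
    using fixed eq_diff_eq[THEN iffD2] unfolding u_def x_def by fastforce
  moreover have "maximal_monotone (scale_op \<gamma> (\<lambda>x. {C x}))"
    using maximal_monotone_scale_op assms(1,2) .
  ultimately have "u - x \<in> scale_op \<gamma> (\<lambda>x. {C x}) x" using resolvent_in_op by metis
  then show ?thesis unfolding u_def x_def by (simp add: scale_op_def)
qed

lemma davis_yin_xA_lipschitz:
  fixes A B :: "'a::{real_inner,complete_space} \<Rightarrow> 'a set"
  assumes mA: "maximal_monotone A" and mB: "maximal_monotone B"
    and coco: "cocoercive \<beta> (\<lambda>x. {C x})" and "0 < \<beta>" "0 < \<gamma>"
  shows "norm (davis_yin_xA \<gamma> A B C z - davis_yin_xA \<gamma> A B C z') \<le> (1 + \<gamma> / \<beta>) * norm (z - z')"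
proof -
  define JB where "JB = resolvent (scale_op \<gamma> B)"
  define d where "d = JB z - JB z'"
  have mmB: "maximal_monotone (scale_op \<gamma> B)" using maximal_monotone_scale_op[OF mB \<open>0 < \<gamma>\<close>] .
  have "(2 *\<^sub>R JB z - z - \<gamma> *\<^sub>R C (JB z)) - (2 *\<^sub>R JB z' - z' - \<gamma> *\<^sub>R C (JB z'))
      = (2 *\<^sub>R d - (z - z')) - \<gamma> *\<^sub>R (C (JB z) - C (JB z'))"
    unfolding d_def by (simp add: algebra_simps)
  then have "norm (davis_yin_xA \<gamma> A B C z - davis_yin_xA \<gamma> A B C z')
      \<le> norm ((2 *\<^sub>R d - (z - z')) - \<gamma> *\<^sub>R (C (JB z) - C (JB z')))"
    unfolding davis_yin_xA_def JB_def[symmetric]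
    by (metis resolvent_nonexpansive maximal_monotone_scale_op mA \<open>0 < \<gamma>\<close>)
  also have "\<dots> \<le> norm (2 *\<^sub>R d - (z - z')) + norm (\<gamma> *\<^sub>R (C (JB z) - C (JB z')))"
    by (rule norm_triangle_ineq4)
  also have "\<dots> = norm (2 *\<^sub>R d - (z - z')) + \<gamma> * norm (C (JB z) - C (JB z'))"
    using \<open>0 < \<gamma>\<close> by simp
  also have "\<dots> \<le> norm (z - z') + \<gamma> / \<beta> * norm (z - z')"
  proof (rule add_mono)
    show "norm (2 *\<^sub>R d - (z - z')) \<le> norm (z - z')"
      unfolding d_def JB_def by (rule reflected_resolvent_nonexpansive[OF mmB])
    have "\<beta> * norm (C (JB z) - C (JB z')) \<le> norm (JB z - JB z')"
      by (rule cocoercive_imp_lipschitz[OF coco])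
    also have "\<dots> \<le> norm (z - z')" unfolding JB_def by (rule resolvent_nonexpansive[OF mmB])
    finally have "\<gamma> * (\<beta> * norm (C (JB z) - C (JB z'))) \<le> \<gamma> * norm (z - z')"
      using \<open>0 < \<gamma>\<close> by simp
    then show "\<gamma> * norm (C (JB z) - C (JB z')) \<le> \<gamma> / \<beta> * norm (z - z')"
      using \<open>0 < \<beta>\<close> by (simp add: field_simps mult.left_commute)
  qed
  finally show ?thesis by (simp add: algebra_simps)
qed

theorem lemma3:
  fixes A B :: "'a::{real_inner, complete_space} \<Rightarrow> 'a set"
    and C :: "'a \<Rightarrow> 'a"
    and \<beta> \<gamma> :: real
    and T :: "'a \<Rightarrow> 'a"
    and z xA xB xC :: "nat \<Rightarrow> 'a"
    and lam :: "nat \<Rightarrow> real"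
    and zstar xstar :: 'a
  assumes mA: "maximal_monotone A"
    and mB: "maximal_monotone B"
    and mC: "maximal_monotone (\<lambda>x. {C x})"
    and beta_pos: "\<beta> > 0"
    and coco: "cocoercive \<beta> (\<lambda>x. {C x})"
    and gamma: "0 < \<gamma>" "\<gamma> \<le> 2 * \<beta>"
    and T_def: "T = (\<lambda>x. resolvent (scale_op \<gamma> (\<lambda>y. {C y}))
                   (resolvent (scale_op \<gamma> A)
                      (2 *\<^sub>R resolvent (scale_op \<gamma> B) x - x - \<gamma> *\<^sub>R C (resolvent (scale_op \<gamma> B) x))
                    + \<gamma> *\<^sub>R C (resolvent (scale_op \<gamma> B) x))
                 + (x - resolvent (scale_op \<gamma> B) x))"
    and a_lt: "2 * \<beta> / (4 * \<beta> - \<gamma>) < 1"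
    and T_avg: "averaged (2 * \<beta> / (4 * \<beta> - \<gamma>)) T"
    and xB_def: "\<And>k. xB k = resolvent (scale_op \<gamma> B) (z k)"
    and xA_def: "\<And>k. xA k = resolvent (scale_op \<gamma> A) (2 *\<^sub>R xB k - z k - \<gamma> *\<^sub>R C (xB k))"
    and xC_def: "\<And>k. xC k = resolvent (scale_op \<gamma> (\<lambda>y. {C y})) (xA k + \<gamma> *\<^sub>R C (xB k))"
    and z_step: "\<And>k. z (Suc k) = z k + lam k *\<^sub>R (xC k - xB k)"
    and lam: "\<And>k. 0 < lam k \<and> lam k < (4 * \<beta> - \<gamma>) / (2 * \<beta>)"
    and fixpt: "T zstar = zstar"
    and xstar_def: "xstar = resolvent (scale_op \<gamma> B) zstar"
  shows "\<forall>j. xA j \<in> cball xstar ((1 + \<gamma> / \<beta>) * norm (z 0 - zstar)) \<and>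
             xB j \<in> cball xstar ((1 + \<gamma> / \<beta>) * norm (z 0 - zstar))"
proof -
  have xA_eq: "xA k = davis_yin_xA \<gamma> A B C (z k)" for k
    unfolding xA_def xB_def davis_yin_xA_def ..
  have xstar_eq: "davis_yin_xA \<gamma> A B C zstar = xstar"
    unfolding xstar_def using fixpt
    by (intro davis_yin_xA_fixed_point[OF mC gamma(1)]) (simp add: T_def davis_yin_xA_def)
  have z_bound: "norm (z k - zstar) \<le> norm (z 0 - zstar)" for k
  proof (rule relaxed_averaged_iteration_bounded[OF T_avg _ fixpt])
    show "0 < 2 * \<beta> / (4 * \<beta> - \<gamma>)" using beta_pos gamma by simp
    show "z (Suc k) = z k + lam k *\<^sub>R (T (z k) - z k)" for k
      using z_step unfolding T_def xC_def xA_def xB_def by simp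
    show "0 \<le> lam k \<and> lam k \<le> 1 / (2 * \<beta> / (4 * \<beta> - \<gamma>))" for k
      using lam[of k] by simp
  qed
  have "1 \<le> 1 + \<gamma> / \<beta>" using beta_pos gamma by simp
  then have z_bound_scaled: "(1 + \<gamma> / \<beta>) * norm (z k - zstar) \<le> (1 + \<gamma> / \<beta>) * norm (z 0 - zstar)"
    "norm (z k - zstar) \<le> (1 + \<gamma> / \<beta>) * norm (z 0 - zstar)" for k
    using z_bound[of k] by (auto intro: mult_left_mono simp: mult_le_cancel_right1 order_trans)
  have "norm (xB j - xstar) \<le> norm (z j - zstar)" for j
    unfolding xB_def xstar_def by (rule resolvent_nonexpansive[OF maximal_monotone_scale_op[OF mB gamma(1)]])
  moreover have "norm (xA j - xstar) \<le> (1 + \<gamma> / \<beta>) * norm (z j - zstar)" for j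
    unfolding xA_eq xstar_eq[symmetric] by (rule davis_yin_xA_lipschitz[OF mA mB coco beta_pos gamma(1)])
  ultimately show ?thesis
    using z_bound_scaled by (simp add: dist_norm norm_minus_commute) (meson order_trans)
qed

end
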